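(* Let $\mathcal D$ be a $(\gamma,V)$-stable distribution of $\mathbf X$. Let $E_*$ be an optimal equivalence class, let $G^*\in E_*$, and let $F\subseteq G^*$ be the set of families of the variables of $\bar V$ in $G^*$. Then: (1) $G^*\setminus F\in\mathcal G_V$; (2) $\mathcal S(G^*\setminus F)=\max_{G\in\mathcal G_V}\mathcal S(G)$; (3) the score of $F$ is maximal among the legal family sets for $\bar V$.
   Context: $\mathbf X=(X_1,\dots,X_d)$ is a random vector; $k$ a fixed positive integer. A family is $\langle X_i,\Pi\rangle$ with $\Pi\subseteq\mathbf X\setminus\{X_i\}$, $|\Pi|\le k$, and $H(\langle X_i,\Pi\rangle)=H(X_i\mid\Pi)$; $\mathcal F_{d,k}$ is the set of families. $\mathcal G_{d,k}$ = DAGs over $\mathbf X$ with in-degree $\le k$, identified with their family sets; for a family set $F$, $\mathcal S(F)=-\sum_{f\in F}H(f)$; $\mathcal S^*=\max_{G\in\mathcal G_{d,k}}\mathcal S(G)$. Markov equivalence classes (ECs) on $\mathcal G_{d,k}$ group DAGs with the same conditional independence constraints and share a score; an optimal EC has score $\mathcal S^*$. For $V\subseteq\mathbf X$, $\bar V:=\mathbf X\setminus V$, and $\mathcal G_V$ is the set of DAGs over $V$ with in-degree at most $k$. A legal family set for $\bar V$ is a set $F\subseteq\mathcal F_{d,k}$ containing exactly one family for each variable in $\bar V$ and no other families, and having no (directed) cycles. $(\gamma,V)$-stable: for $\gamma>0$ and $V\subseteq\mathbf X$, (1) in every $G\in\mathcal G_{d,k}$ with $\mathcal S(G)\ge\mathcal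 S^*-\gamma$ all parents of every variable in $V$ are in $V$; (2) for the marginal distribution on $V$ (over $\mathcal G_V$) there is a unique optimal EC and the score gap between the best and second-best EC is more than $\gamma$. *)

theory Defs
  imports "HOL-Probability.Probability_Mass_Function"
begin

text \<open>Variables X_0,...,X_{d-1} are identified with the indices 0..<d.
  A joint distribution of X is a pmf on assignments nat => 'v with 'v finite
  (coordinates >= d are irrelevant).  A family <X_i, Pi> is a pair (i, Pi).\<close>

type_synonym family = "nat \<times> nat set"

definition ent :: "(nat \<Rightarrow> 'v::finite) pmf \<Rightarrow> nat set \<Rightarrow> real" where
  "ent P S = (let Q = map_pmf (\<lambda>x i. if i \<in> S then x i else undefined) P in
      - (\<Sum>a\<in>set_pmf Q. pmf Q a * log 2 (pmf Q a)))"

definition Hfam :: "(nat \<Rightarrow> 'v::finite) pmf \<Rightarrow> family \<Rightarrow> real" where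
  "Hfam P f = ent P (insert (fst f) (snd f)) - ent P (snd f)"

definition score :: "(nat \<Rightarrow> 'v::finite) pmf \<Rightarrow> family set \<Rightarrow> real" where
  "score P F = - (\<Sum>f\<in>F. Hfam P f)"

definition is_family :: "nat \<Rightarrow> nat \<Rightarrow> family \<Rightarrow> bool" where
  "is_family d k f \<longleftrightarrow> fst f < d \<and> snd f \<subseteq> {..<d} - {fst f} \<and> card (snd f) \<le> k"

definition edges :: "family set \<Rightarrow> nat rel" where
  "edges F = {(j, i). \<exists>Pi. (i, Pi) \<in> F \<and> j \<in> Pi}"

definition legal_famset :: "nat \<Rightarrow> nat \<Rightarrow> nat set \<Rightarrow> family set \<Rightarrow> bool" where
  "legal_famset d k W F \<longleftrightarrow>
     (\<forall>f\<in>F. is_family d k f \<and> fst f \<in> W) \<and>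
     (\<forall>i\<in>W. \<exists>!Pi. (i, Pi) \<in> F) \<and> acyclic (edges F)"

definition dags_on :: "nat \<Rightarrow> nat \<Rightarrow> nat set \<Rightarrow> family set set" where
  "dags_on d k V = {G. legal_famset d k V G \<and> (\<forall>f\<in>G. snd f \<subseteq> V)}"

definition opt_score :: "(nat \<Rightarrow> 'v::finite) pmf \<Rightarrow> nat \<Rightarrow> nat \<Rightarrow> nat set \<Rightarrow> real" where
  "opt_score P d k V = Max (score P ` dags_on d k V)"

definition is_path :: "nat rel \<Rightarrow> nat list \<Rightarrow> bool" where
  "is_path E p \<longleftrightarrow> distinct p \<and>
     (\<forall>m. Suc m < length p \<longrightarrow> (p!m, p!Suc m) \<in> E \<or> (p!Suc m, p!m) \<in> E)"

definition collider :: "nat rel \<Rightarrow> nat list \<Rightarrow> nat \<Rightarrow> bool" where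
  "collider E p m \<longleftrightarrow> (p!(m-1), p!m) \<in> E \<and> (p!Suc m, p!m) \<in> E"

definition blocked :: "nat rel \<Rightarrow> nat set \<Rightarrow> nat list \<Rightarrow> bool" where
  "blocked E Z p \<longleftrightarrow> (\<exists>m. 0 < m \<and> Suc m < length p \<and>
     (if collider E p m then E\<^sup>* `` {p!m} \<inter> Z = {} else p!m \<in> Z))"

definition d_separated :: "nat rel \<Rightarrow> nat \<Rightarrow> nat \<Rightarrow> nat set \<Rightarrow> bool" where
  "d_separated E a b Z \<longleftrightarrow>
     (\<forall>p. is_path E p \<and> p \<noteq> [] \<and> hd p = a \<and> last p = b \<longrightarrow> blocked E Z p)"

text \<open>Markov equivalence of two DAGs over V: same conditional independence
  constraints, i.e. same d-separation statements among variables of V.\<close>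
definition markov_equiv :: "nat set \<Rightarrow> family set \<Rightarrow> family set \<Rightarrow> bool" where
  "markov_equiv V G1 G2 \<longleftrightarrow>
     (\<forall>a b Z. a \<in> V \<and> b \<in> V \<and> Z \<subseteq> V \<and> a \<noteq> b \<and> a \<notin> Z \<and> b \<notin> Z \<longrightarrow>
        (d_separated (edges G1) a b Z \<longleftrightarrow> d_separated (edges G2) a b Z))"

text \<open>(gamma,V)-stability.  (1) near-optimal DAGs (within gamma of S*) have all
  parents of V-variables inside V; (2) on V there is an optimal DAG G0 whose
  equivalence class is the unique optimal one, and every DAG outside that class
  scores more than gamma below the optimum (best minus second-best EC > gamma).\<close>
definition stable :: "(nat \<Rightarrow> 'v::finite) pmf \<Rightarrow> nat \<Rightarrow> nat \<Rightarrow> real \<Rightarrow> nat set \<Rightarrow> bool" where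
  "stable P d k \<gamma> V \<longleftrightarrow> \<gamma> > 0 \<and> V \<subseteq> {..<d} \<and>
     (\<forall>G\<in>dags_on d k {..<d}. score P G \<ge> opt_score P d k {..<d} - \<gamma> \<longrightarrow>
         (\<forall>f\<in>G. fst f \<in> V \<longrightarrow> snd f \<subseteq> V)) \<and>
     (\<exists>G0\<in>dags_on d k V. score P G0 = opt_score P d k V \<and>
         (\<forall>G\<in>dags_on d k V. \<not> markov_equiv V G G0 \<longrightarrow>
             opt_score P d k V - score P G > \<gamma>))"

end

theory Submission
  imports Defs
begin

text \<open>Only condition (1) of stability is needed: in the optimal DAG the variables of V
  take all their parents from V, so it splits into a DAG on V and a legal family set for the
  complement. Conversely, every DAG on V combines with every legal family set for the
  complement into a DAG on all variables, since no edge runs from the complement into V and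
  hence no cycle can mix the two parts. Scores are additive over the two parts, so a part
  that could be improved would improve the optimal DAG.\<close>

lemma trancl_Un_ending_inside:
  assumes A: "A \<subseteq> V \<times> UNIV" and B: "B \<subseteq> UNIV \<times> - V"
    and "(x, y) \<in> (A \<union> B)\<^sup>+" and "y \<in> V"
  shows "(x, y) \<in> A\<^sup>+"
  using assms(3,4)
proof (induction rule: trancl_induct)
  case (base y)
  then show ?case using B by auto
next
  case (step y z)
  then have "(y, z) \<in> A" using B by auto
  moreover from this have "y \<in> V" using A by auto
  ultimately show ?case using step.IH by auto
qed

lemma trancl_Un_starting_outside:
  assumes A: "A \<subseteq> V \<times> UNIV" and B: "B \<subseteq> UNIV \<times> - V"
    and "(x, y) \<in> (A \<union> B)\<^sup>+" and "x \<notin> V"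
  shows "(x, y) \<in> B\<^sup>+"
  using assms(3,4)
proof (induction rule: trancl_induct)
  case (base y)
  then show ?case using A by auto
next
  case (step y z)
  then have "(x, y) \<in> B\<^sup>+" by blast
  then have "y \<notin> V" using B by (cases rule: tranclE) auto
  with step.hyps(2) have "(y, z) \<in> B" using A by auto
  with \<open>(x, y) \<in> B\<^sup>+\<close> show ?case by auto
qed

lemma acyclic_Un_layered:
  assumes "acyclic A" "acyclic B" "A \<subseteq> V \<times> UNIV" "B \<subseteq> UNIV \<times> - V"
  shows "acyclic (A \<union> B)"
proof (rule acyclicI, intro allI notI)
  fix x assume cycle: "(x, x) \<in> (A \<union> B)\<^sup>+"
  show False
  proof (cases "x \<in> V")
    case True
    with trancl_Un_ending_inside[OF assms(3,4) cycle] assms(1) show False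
      by (auto simp: acyclic_def)
  next
    case False
    with trancl_Un_starting_outside[OF assms(3,4) cycle] assms(2) show False
      by (auto simp: acyclic_def)
  qed
qed

lemma edges_Un: "edges (A \<union> B) = edges A \<union> edges B"
  unfolding edges_def by blast

lemma edges_mono: "A \<subseteq> B \<Longrightarrow> edges A \<subseteq> edges B"
  unfolding edges_def by blast

lemma edges_subset_parents: "\<forall>f\<in>F. snd f \<subseteq> V \<Longrightarrow> edges F \<subseteq> V \<times> UNIV"
  unfolding edges_def by force

lemma edges_subset_children: "\<forall>f\<in>F. fst f \<in> W \<Longrightarrow> edges F \<subseteq> UNIV \<times> W"
  unfolding edges_def by auto

lemma legal_famsetD:
  assumes "legal_famset d k W F"
  shows legal_famset_family: "f \<in> F \<Longrightarrow> is_family d k f"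
    and legal_famset_var: "f \<in> F \<Longrightarrow> fst f \<in> W"
    and legal_famset_unique: "i \<in> W \<Longrightarrow> \<exists>!Pi. (i, Pi) \<in> F"
    and legal_famset_acyclic: "acyclic (edges F)"
  using assms unfolding legal_famset_def by blast+

lemma legal_famsetI:
  assumes "\<And>f. f \<in> F \<Longrightarrow> is_family d k f" and "\<And>f. f \<in> F \<Longrightarrow> fst f \<in> W"
    and "\<And>i. i \<in> W \<Longrightarrow> \<exists>!Pi. (i, Pi) \<in> F" and "acyclic (edges F)"
  shows "legal_famset d k W F"
  using assms unfolding legal_famset_def by blast

lemma legal_famset_subset: "legal_famset d k W F \<Longrightarrow> F \<subseteq> {..<d} \<times> Pow {..<d}"
  unfolding legal_famset_def is_family_def by force

lemma legal_famset_finite: "legal_famset d k W F \<Longrightarrow> finite F"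
  using legal_famset_subset by (rule finite_subset) auto

lemma finite_dags_on: "finite (dags_on d k W)"
proof (rule finite_subset)
  show "dags_on d k W \<subseteq> Pow ({..<d} \<times> Pow {..<d})"
    unfolding dags_on_def using legal_famset_subset by blast
qed auto

lemma score_le_opt_score: "G \<in> dags_on d k W \<Longrightarrow> score P G \<le> opt_score P d k W"
  unfolding opt_score_def using finite_dags_on by simp

lemma opt_score_eqI:
  assumes "G \<in> dags_on d k W" and "\<And>G'. G' \<in> dags_on d k W \<Longrightarrow> score P G' \<le> score P G"
  shows "opt_score P d k W = score P G"
  unfolding opt_score_def using assms finite_dags_on by (intro Max_eqI) auto

lemma score_Un_disjoint:
  "finite A \<Longrightarrow> finite B \<Longrightarrow> A \<inter> B = {} \<Longrightarrow> score P (A \<union> B) = score P A + score P B"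
  unfolding score_def by (simp add: sum.union_disjoint)

lemma legal_famset_restrict:
  assumes G: "legal_famset d k W G" and "U \<subseteq> W"
  shows "legal_famset d k U {f \<in> G. fst f \<in> U}"
proof (rule legal_famsetI)
  show "is_family d k f" if "f \<in> {f \<in> G. fst f \<in> U}" for f
    using that legal_famset_family[OF G] by blast
  show "\<exists>!Pi. (i, Pi) \<in> {f \<in> G. fst f \<in> U}" if "i \<in> U" for i
    using legal_famset_unique[OF G, of i] that \<open>U \<subseteq> W\<close> by auto
  show "acyclic (edges {f \<in> G. fst f \<in> U})"
    using legal_famset_acyclic[OF G] by (rule acyclic_subset[OF _ edges_mono]) blast
qed auto

lemma legal_famset_Un:
  assumes H: "legal_famset d k V H" and parents: "\<forall>f\<in>H. snd f \<subseteq> V"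
    and F: "legal_famset d k W F" and disj: "V \<inter> W = {}"
  shows "legal_famset d k (V \<union> W) (H \<union> F)"
proof (rule legal_famsetI)
  show "is_family d k f" if "f \<in> H \<union> F" for f
    using that legal_famset_family[OF H] legal_famset_family[OF F] by blast
  show "fst f \<in> V \<union> W" if "f \<in> H \<union> F" for f
    using that legal_famset_var[OF H] legal_famset_var[OF F] by blast
  show "\<exists>!Pi. (i, Pi) \<in> H \<union> F" if i: "i \<in> V \<union> W" for i
  proof -
    have H_at: "(i, Pi) \<in> H \<Longrightarrow> i \<in> V" and F_at: "(i, Pi) \<in> F \<Longrightarrow> i \<in> W" for Pi
      using legal_famset_var[OF H] legal_famset_var[OF F] by force+
    consider "i \<in> V" | "i \<in> W" using i by blast
    then show ?thesis
    proof cases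
      case 1
      then have "(i, Pi) \<in> H \<union> F \<longleftrightarrow> (i, Pi) \<in> H" for Pi
        using F_at disj by blast
      with legal_famset_unique[OF H 1] show ?thesis by simp
    next
      case 2
      then have "(i, Pi) \<in> H \<union> F \<longleftrightarrow> (i, Pi) \<in> F" for Pi
        using H_at disj by blast
      with legal_famset_unique[OF F 2] show ?thesis by simp
    qed
  qed
  have "edges F \<subseteq> UNIV \<times> W"
    using legal_famset_var[OF F] edges_subset_children by blast
  with disj have "edges F \<subseteq> UNIV \<times> - V"
    by blast
  with legal_famset_acyclic[OF H] legal_famset_acyclic[OF F] edges_subset_parents[OF parents]
  show "acyclic (edges (H \<union> F))"
    unfolding edges_Un by (rule acyclic_Un_layered)
qed

lemma score_Un_legal_famset:
  assumes "legal_famset d k V H" and "legal_famset d k W F" and "V \<inter> W = {}"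
  shows "score P (H \<union> F) = score P H + score P F"
proof (rule score_Un_disjoint)
  show "H \<inter> F = {}"
    using assms legal_famset_var by blast
qed (use assms legal_famset_finite in blast)+

lemma dags_on_restrict:
  assumes "G \<in> dags_on d k W" and "U \<subseteq> W" and "\<forall>f\<in>G. fst f \<in> U \<longrightarrow> snd f \<subseteq> U"
  shows "{f \<in> G. fst f \<in> U} \<in> dags_on d k U"
  using assms legal_famset_restrict unfolding dags_on_def by blast

lemma dags_on_Un_legal_famset:
  assumes "V \<subseteq> {..<d}" and "H \<in> dags_on d k V" and "legal_famset d k ({..<d} - V) F"
  shows "H \<union> F \<in> dags_on d k {..<d}"
proof -
  have "legal_famset d k (V \<union> ({..<d} - V)) (H \<union> F)"
    using assms(2,3) by (intro legal_famset_Un) (auto simp: dags_on_def)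
  then have "legal_famset d k {..<d} (H \<union> F)"
    using assms(1) by (simp add: Un_absorb1)
  moreover have "snd f \<subseteq> {..<d}" if "f \<in> H \<union> F" for f
    using that legal_famset_family[OF \<open>legal_famset d k {..<d} (H \<union> F)\<close>]
    unfolding is_family_def by blast
  ultimately show ?thesis
    unfolding dags_on_def by blast
qed

lemma optimal_dag_split:
  assumes V: "V \<subseteq> {..<d}" and H: "H \<in> dags_on d k V"
    and F: "legal_famset d k ({..<d} - V) F"
    and opt: "score P (H \<union> F) = opt_score P d k {..<d}"
  shows "score P H = opt_score P d k V"
    and "legal_famset d k ({..<d} - V) F' \<Longrightarrow> score P F' \<le> score P F"
proof -
  have split: "score P (H' \<union> F') = score P H' + score P F'"
    if "H' \<in> dags_on d k V" and "legal_famset d k ({..<d} - V) F'" for H' F'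
    using that by (intro score_Un_legal_famset) (auto simp: dags_on_def)
  have exchange: "score P H' + score P F' \<le> score P H + score P F"
    if "H' \<in> dags_on d k V" and "legal_famset d k ({..<d} - V) F'" for H' F'
    using score_le_opt_score[where P = P, OF dags_on_Un_legal_famset[OF V that]] opt split[OF that]
      split[OF H F] by simp
  show "score P H = opt_score P d k V"
    using exchange[OF _ F] by (intro opt_score_eqI[symmetric] H) simp
  show "legal_famset d k ({..<d} - V) F' \<Longrightarrow> score P F' \<le> score P F"
    using exchange[OF H] by simp
qed

theorem lemma4:
  fixes P :: "(nat \<Rightarrow> 'v::finite) pmf" and d k :: nat and \<gamma> :: real
    and V :: "nat set" and Gs :: "family set"
  assumes "stable P d k \<gamma> V"
    and "Gs \<in> dags_on d k {..<d}"
    and "score P Gs = opt_score P d k {..<d}"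
  defines "F \<equiv> {f \<in> Gs. fst f \<in> {..<d} - V}"
  shows "Gs - F \<in> dags_on d k V \<and>
         score P (Gs - F) = opt_score P d k V \<and>
         legal_famset d k ({..<d} - V) F \<and>
         (\<forall>F'. legal_famset d k ({..<d} - V) F' \<longrightarrow> score P F' \<le> score P F)"
proof -
  have V: "V \<subseteq> {..<d}" and parents: "\<forall>f\<in>Gs. fst f \<in> V \<longrightarrow> snd f \<subseteq> V"
    using assms(1-3) unfolding stable_def by auto
  have Gs: "legal_famset d k {..<d} Gs"
    using assms(2) unfolding dags_on_def by blast
  have "Gs - F = {f \<in> Gs. fst f \<in> V}"
    using legal_famset_var[OF Gs] V unfolding F_def by auto
  then have H: "Gs - F \<in> dags_on d k V"
    using dags_on_restrict[OF assms(2) V parents] by simp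
  have LF: "legal_famset d k ({..<d} - V) F"
    unfolding F_def using Gs by (rule legal_famset_restrict) blast
  have "score P ((Gs - F) \<union> F) = opt_score P d k {..<d}"
    using assms(3) unfolding F_def by (simp add: Un_absorb2)
  with optimal_dag_split[OF V H LF] show ?thesis
    using H LF by blast
qed

end
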